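(* Let $N\ge2$ and let $(A_1,\dots,A_N)$ be nonnegative random variables satisfying $P\{\sum_{i}\mathbf{1}\{A_i>0\}\in\{0,1\}\}<1$, $\mathbb{E}[\sum_i\mathbf{1}\{A_i>0\}]>1$, $P\{A_i\in\{0,1\}\ \forall i\}<1$. Let $\phi(t,\xi)$ be the solution of the Cauchy problem described in the context with initial characteristic function $\phi_0$ of a distribution function $F_0$. Assume $F_0$ satisfies $(\mathbf{H}_\gamma)$ (see context) for some $\gamma\in(0,2]$. If $\mu(\delta)<\mu(\gamma)<+\infty$ for some $0<\delta<\gamma$, then $\lim_{t\to+\infty}\phi(t,e^{-t\mu(\gamma)}\xi)=1$ for every $\xi\in\mathbb{R}$.
   Context: $\mathcal{Q}(s)=\mathbb{E}[\sum_{j=1}^N A_j^s]-1$ for $s\ge0$ (convention $0^0=0$), $\mu(s)=\mathcal{Q}(s)/s$. Cauchy problem: for each $t\ge0$, $\phi(t,\cdot)$ is a characteristic function, $\partial_t\phi(t,\xi)+\phi(t,\xi)=\mathbb{E}[\prod_{i=1}^N\phi(t,A_i\xi)]$ for $t>0,\xi\in\mathbb{R}$, $\phi(0,\cdot)=\phi_0$ (unique solution). Hypothesis $(\mathbf{H}_\gamma)$: if $\gamma=1$: either (a) $\int|v|dF_0(v)<\infty$, or (b) $F_0$ symmetric with $\lim_{x\to+\infty}x(1-F_0(x))=c_0^+=\lim_{x\to-\infty}|x|F_0(x)$, $0<c_0^+<\infty$. If $\gamma=2$: $0<\int v^2dF_0(v)<\infty$ and $\int v\,dF_0(v)=0$.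 If $\gamma\in(0,1)\cup(1,2)$: $\lim_{x\to+\infty}x^\gamma(1-F_0(x))=c_0^+<\infty$, $\lim_{x\to-\infty}|x|^\gamma F_0(x)=c_0^-<\infty$, $c_0^++c_0^->0$, and $\int v\,dF_0(v)=0$ if $\gamma>1$. *)

theory Defs
  imports "HOL-Probability.Probability"
begin

text \<open>E[sum_j A_j^s] - 1, with 0 powr s = 0 (convention 0^0 = 0); value in ereal (may be +infinity).\<close>
definition Qfun :: "'a measure \<Rightarrow> nat \<Rightarrow> (nat \<Rightarrow> 'a \<Rightarrow> real) \<Rightarrow> real \<Rightarrow> ereal" where
  "Qfun M N A s = enn2ereal (\<integral>\<^sup>+ \<omega>. (\<Sum>j<N. ennreal (A j \<omega> powr s)) \<partial>M) - 1"

definition mufun :: "'a measure \<Rightarrow> nat \<Rightarrow> (nat \<Rightarrow> 'a \<Rightarrow> real) \<Rightarrow> real \<Rightarrow> ereal" where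
  "mufun M N A s = Qfun M N A s / ereal s"

definition H_gamma :: "real measure \<Rightarrow> real \<Rightarrow> bool" where
  "H_gamma M0 \<gamma> \<longleftrightarrow>
     (\<gamma> = 1 \<longrightarrow>
        (integrable M0 (\<lambda>v. \<bar>v\<bar>)
         \<or> (distr M0 borel uminus = M0 \<and>
            (\<exists>c. 0 < c \<and> ((\<lambda>x. x * (1 - cdf M0 x)) \<longlongrightarrow> c) at_top
                 \<and> ((\<lambda>x. \<bar>x\<bar> * cdf M0 x) \<longlongrightarrow> c) at_bot)))) \<and>
     (\<gamma> = 2 \<longrightarrow>
        integrable M0 (\<lambda>v. v ^ 2) \<and> 0 < (\<integral>v. v ^ 2 \<partial>M0)
        \<and> integrable M0 (\<lambda>v. v) \<and> (\<integral>v. v \<partial>M0) = 0) \<and>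
     ((\<gamma> \<in> {0<..<1} \<union> {1<..<2}) \<longrightarrow>
        (\<exists>cp cm. ((\<lambda>x. x powr \<gamma> * (1 - cdf M0 x)) \<longlongrightarrow> cp) at_top
                \<and> ((\<lambda>x. \<bar>x\<bar> powr \<gamma> * cdf M0 x) \<longlongrightarrow> cm) at_bot
                \<and> 0 < cp + cm
                \<and> (\<gamma> > 1 \<longrightarrow> integrable M0 (\<lambda>v. v) \<and> (\<integral>v. v \<partial>M0) = 0)))"

definition cauchy_solution ::
  "'a measure \<Rightarrow> nat \<Rightarrow> (nat \<Rightarrow> 'a \<Rightarrow> real) \<Rightarrow> (real \<Rightarrow> complex) \<Rightarrow> (real \<Rightarrow> real \<Rightarrow> complex) \<Rightarrow> bool" where
  "cauchy_solution M N A phi0 phi \<longleftrightarrow>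
     (\<forall>t\<ge>0. \<exists>F. real_distribution F \<and> phi t = char F) \<and>
     (\<forall>\<xi>. continuous_on {0..} (\<lambda>t. phi t \<xi>)) \<and>
     (\<forall>t>0. \<forall>\<xi>. ((\<lambda>s. phi s \<xi>) has_vector_derivative
          (- phi t \<xi> + (\<integral>\<omega>. (\<Prod>i<N. phi t (A i \<omega> * \<xi>)) \<partial>M))) (at t)) \<and>
     phi 0 = phi0"

end

theory Submission
  imports Defs
begin

text \<open>Since \<delta> < \<gamma> \<le> 2, hypothesis (H_\<gamma>) makes the \<delta>-th absolute moment of the initial law
  finite (via its tail bounds), whence |1 - \<phi>0(\<xi>)| \<le> C |\<xi>|^\<delta>; for \<delta> > 1 the centring lets one
  subtract the linear term of exp(i y). This bound propagates along the equation with rate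
  Q(\<delta>) = E[\<Sum> A_j^\<delta>] - 1: combining |1 - \<Prod> a_i| \<le> \<Sum> |1 - a_i| in the gain term with a comparison
  argument for exp(t) (1 - \<phi>(t,\<xi>)) gives |1 - \<phi>(t,\<xi>)| \<le> C exp(Q(\<delta>) t) |\<xi>|^\<delta>. At the point
  exp(-t \<mu>(\<gamma>)) \<xi> the right-hand side is C |\<xi>|^\<delta> exp(-(\<delta> \<mu>(\<gamma>) - Q(\<delta>)) t), which tends to 0
  because \<mu>(\<delta>) < \<mu>(\<gamma>).\<close>

text \<open>Mean value theorem for the projection of \<open>z\<close> onto the direction of \<open>z b - z a\<close>.\<close>

lemma norm_diff_le_majorant_diff:
  fixes z :: "real \<Rightarrow> 'a::real_inner"
  assumes "a < b" and "continuous_on {a..b} z" and "continuous_on {a..b} B"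
    and "\<And>s. a < s \<Longrightarrow> s < b \<Longrightarrow> (z has_vector_derivative z' s) (at s)"
    and "\<And>s. a < s \<Longrightarrow> s < b \<Longrightarrow> (B has_real_derivative B' s) (at s)"
    and "\<And>s. a < s \<Longrightarrow> s < b \<Longrightarrow> norm (z' s) \<le> B' s"
  shows "norm (z b - z a) \<le> B b - B a"
proof -
  define u where "u = sgn (z b - z a)"
  define f where "f s = u \<bullet> z s - B s" for s
  have f_deriv: "(f has_real_derivative u \<bullet> z' s - B' s) (at s)" if "a < s" "s < b" for s
    unfolding f_def has_real_derivative_iff_has_vector_derivative
    by (intro has_vector_derivative_diff
        bounded_linear.has_vector_derivative[OF bounded_linear_inner_right] assms(4) that
        assms(5)[OF that, unfolded has_real_derivative_iff_has_vector_derivative])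
  have "continuous_on {a..b} f"
    unfolding f_def using assms(2,3) by (intro continuous_intros)
  then obtain s l where s: "a < s" "s < b" and l: "(f has_real_derivative l) (at s)"
    and mvt: "f b - f a = (b - a) * l"
    using MVT[OF assms(1), of f] f_deriv by (metis real_differentiable_def)
  have "l = u \<bullet> z' s - B' s" using DERIV_unique[OF l f_deriv[OF s]] .
  moreover have "u \<bullet> z' s \<le> norm (z' s)"
  proof -
    have "norm u \<le> 1" unfolding u_def by (simp add: norm_sgn)
    then have "norm u * norm (z' s) \<le> norm (z' s)"
      using mult_right_mono[of "norm u" 1 "norm (z' s)"] by simp
    then show ?thesis using norm_cauchy_schwarz[of u "z' s"] by linarith
  qed
  ultimately have "f b - f a \<le> 0" using mvt assms(1) assms(6)[OF s] by (simp add: mult_nonneg_nonpos)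
  moreover have "u \<bullet> (z b - z a) = norm (z b - z a)"
    unfolding u_def sgn_div_norm inner_scaleR_left power2_norm_eq_inner[symmetric]
    by (cases "z b = z a") (auto simp: power2_eq_square)
  ultimately show ?thesis unfolding f_def by (simp add: inner_diff_right)
qed

lemma cmod_iexp_minus_one_le_powr:
  assumes "0 < d" "d \<le> 1"
  shows "cmod (iexp y - 1) \<le> 2 * \<bar>y\<bar> powr d"
proof (cases "\<bar>y\<bar> \<le> 1")
  case True
  have "cmod (iexp y - 1) \<le> \<bar>y\<bar>" using iexp_approx1[of y 0] by simp
  also have "\<dots> \<le> \<bar>y\<bar> powr d"
  proof (cases "y = 0")
    case False
    then show ?thesis using True assms powr_mono'[of d 1 "\<bar>y\<bar>"] by simp
  qed simp
  finally show ?thesis using powr_ge_zero[of "\<bar>y\<bar>" d] by linarith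
next
  case False
  have "cmod (iexp y - 1) \<le> 2" using iexp_approx2[of y 0] by simp
  also have "\<dots> \<le> 2 * \<bar>y\<bar> powr d" using False assms ge_one_powr_ge_zero[of "\<bar>y\<bar>" d] by simp
  finally show ?thesis .
qed

lemma cmod_iexp_minus_linear_le_powr:
  assumes "1 < d" "d \<le> 2"
  shows "cmod (iexp y - 1 - \<i> * y) \<le> 2 * \<bar>y\<bar> powr d"
proof (cases "\<bar>y\<bar> \<le> 1")
  case True
  have "cmod (iexp y - 1 - \<i> * y) \<le> \<bar>y\<bar> ^ 2 / 2"
    using iexp_approx1[of y 1] by (simp add: numeral_2_eq_2 diff_diff_eq)
  also have "\<dots> \<le> \<bar>y\<bar> ^ 2" by simp
  also have "\<dots> \<le> \<bar>y\<bar> powr d"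
  proof (cases "y = 0")
    case False
    then show ?thesis using True assms powr_mono'[of d 2 "\<bar>y\<bar>"] by (simp add: powr_numeral)
  qed simp
  finally show ?thesis using powr_ge_zero[of "\<bar>y\<bar>" d] by linarith
next
  case False
  have "cmod (iexp y - 1 - \<i> * y) \<le> 2 * \<bar>y\<bar>" using iexp_approx2[of y 1] by (simp add: diff_diff_eq)
  also have "\<dots> \<le> 2 * \<bar>y\<bar> powr d" using False assms powr_mono[of 1 d "\<bar>y\<bar>"] by simp
  finally show ?thesis .
qed

text \<open>For \<open>d > 1\<close> the linear term of \<open>iexp\<close> is subtracted, which costs nothing because
  the distribution is centred.\<close>

lemma (in real_distribution) cmod_one_minus_char_le_moment:
  assumes d: "0 < d" "d \<le> 2" and moment: "integrable M (\<lambda>x. \<bar>x\<bar> powr d)"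
    and centred: "1 < d \<Longrightarrow> integrable M (\<lambda>x. x) \<and> expectation (\<lambda>x. x) = 0"
  shows "cmod (1 - char M \<xi>) \<le> 2 * expectation (\<lambda>x. \<bar>x\<bar> powr d) * \<bar>\<xi>\<bar> powr d"
proof -
  define c :: "real \<Rightarrow> complex" where "c y = (if d \<le> 1 then 0 else \<i> * y)" for y
  have c_int: "integrable M (\<lambda>x. c (\<xi> * x))" and c_zero: "(CLINT x|M. c (\<xi> * x)) = 0"
  proof -
    have "integrable M (\<lambda>x. c (\<xi> * x)) \<and> (CLINT x|M. c (\<xi> * x)) = 0"
    proof (cases "d \<le> 1")
      case False
      then have "integrable M (\<lambda>x. x)" "expectation (\<lambda>x. x) = 0" using centred by auto
      then show ?thesis unfolding c_def using False
        by (simp add: integrable_of_real integral_complex_of_real)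
    qed (simp add: c_def)
    then show "integrable M (\<lambda>x. c (\<xi> * x))" "(CLINT x|M. c (\<xi> * x)) = 0" by auto
  qed
  have iexp_int: "integrable M (\<lambda>x. iexp (\<xi> * x))"
    by (intro integrable_const_bound[of _ 1]) auto
  have "1 - char M \<xi> = - (CLINT x|M. iexp (\<xi> * x) - 1 - c (\<xi> * x))"
    unfolding char_def using iexp_int c_int c_zero by (simp del: space_eq_univ add: prob_space)
  then have "cmod (1 - char M \<xi>) = cmod (CLINT x|M. iexp (\<xi> * x) - 1 - c (\<xi> * x))"
    by simp
  also have "\<dots> \<le> expectation (\<lambda>x. 2 * \<bar>\<xi>\<bar> powr d * \<bar>x\<bar> powr d)"
  proof (rule Bochner_Integration.integral_norm_bound_integral)
    show "integrable M (\<lambda>x. iexp (\<xi> * x) - 1 - c (\<xi> * x))" using iexp_int c_int by simp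
    show "integrable M (\<lambda>x. 2 * \<bar>\<xi>\<bar> powr d * \<bar>x\<bar> powr d)" using moment by simp
    fix x
    have "cmod (iexp (\<xi> * x) - 1 - c (\<xi> * x)) \<le> 2 * \<bar>\<xi> * x\<bar> powr d"
      using cmod_iexp_minus_one_le_powr[OF d(1), of "\<xi> * x"]
        cmod_iexp_minus_linear_le_powr[OF _ d(2), of "\<xi> * x"]
      unfolding c_def by (cases "d \<le> 1") auto
    then show "cmod (iexp (\<xi> * x) - 1 - c (\<xi> * x)) \<le> 2 * \<bar>\<xi>\<bar> powr d * \<bar>x\<bar> powr d"
      by (simp add: abs_mult powr_mult)
  qed
  finally show ?thesis by (simp add: mult_ac)
qed

lemma abs_powr_le_dyadic_layers:
  fixes y :: real
  assumes d: "0 < d" and x0: "0 < x0"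
  shows "ennreal (\<bar>y\<bar> powr d) \<le> ennreal (x0 powr d) + (\<Sum>k. ennreal ((x0 * 2 powr (real k + 1)) powr d)
      * indicator {y. x0 * 2 powr real k < \<bar>y\<bar>} y)"
    (is "_ \<le> _ + (\<Sum>k. ?layer k)")
proof (cases "\<bar>y\<bar> \<le> x0")
  case True
  then have "\<bar>y\<bar> powr d \<le> x0 powr d" using d by (intro powr_mono2) auto
  then show ?thesis by (intro add_increasing2) auto
next
  case False
  define k where "k = nat (\<lceil>log 2 (\<bar>y\<bar> / x0)\<rceil> - 1)"
  have "0 < log 2 (\<bar>y\<bar> / x0)" using False x0 by simp
  then have k: "real k < log 2 (\<bar>y\<bar> / x0)" "log 2 (\<bar>y\<bar> / x0) \<le> real k + 1"
    unfolding k_def by linarith+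
  have "x0 * 2 powr real k < \<bar>y\<bar>"
    using k(1) False x0 by (subst (asm) less_log_iff) (auto simp: field_simps)
  moreover have "\<bar>y\<bar> \<le> x0 * 2 powr (real k + 1)"
    using k(2) False x0 by (subst (asm) log_le_iff) (auto simp: field_simps)
  ultimately have "ennreal (\<bar>y\<bar> powr d) \<le> ?layer k"
    using d by (auto intro!: ennreal_leI powr_mono2)
  also have "\<dots> \<le> (\<Sum>k. ?layer k)"
    using sum_le_suminf[OF summableI, of "{k}"] by simp
  finally show ?thesis by (intro add_increasing) auto
qed

lemma dyadic_layer_weight:
  assumes "0 < x0"
  shows "(x0 * 2 powr (real k + 1)) powr d * (x0 * 2 powr real k) powr (-g)
    = x0 powr (d - g) * 2 powr d * (2 powr (d - g)) ^ k"
proof -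
  have "(x0 * 2 powr (real k + 1)) powr d * (x0 * 2 powr real k) powr (-g)
      = x0 powr (d - g) * 2 powr ((real k + 1) * d + real k * (- g))"
    using assms by (simp add: powr_mult powr_powr powr_add powr_diff powr_minus field_simps)
  also have "\<dots> = x0 powr (d - g) * 2 powr d * (2 powr (d - g)) ^ k"
    by (simp add: powr_realpow[symmetric] powr_powr powr_add[symmetric] algebra_simps)
  finally show ?thesis .
qed

text \<open>The layers above \<open>x0 * 2 powr k\<close> have weights \<open>\<approx> 2 powr (d * k)\<close> and probabilities
  \<open>O(2 powr (- g * k))\<close>, so they sum to a convergent geometric series since \<open>d < g\<close>.\<close>

lemma (in real_distribution) integrable_abs_powr_of_tail_bound:
  assumes d: "0 < d" "d < g" and x0: "0 < x0"
    and tail: "\<And>x. x0 \<le> x \<Longrightarrow> prob {y. x < \<bar>y\<bar>} \<le> K * x powr (-g)"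
  shows "integrable M (\<lambda>y. \<bar>y\<bar> powr d)"
proof -
  define c where "c k = (x0 * 2 powr (real k + 1)) powr d" for k :: nat
  define E where "E k = {y::real. x0 * 2 powr real k < \<bar>y\<bar>}" for k :: nat
  define r where "r = (2::real) powr (d - g)"
  define D where "D = max K 0 * (x0 powr (d - g) * 2 powr d)"
  have E_sets: "E k \<in> events" for k
    unfolding E_def by measurable
  have r: "0 \<le> r" "r < 1" unfolding r_def using d by (auto intro!: powr_less_one)
  have layer: "ennreal (c k) * emeasure M (E k) \<le> ennreal (D * r ^ k)" for k
  proof -
    have "prob (E k) \<le> K * (x0 * 2 powr real k) powr (-g)"
      unfolding E_def using x0 by (intro tail) (simp add: ge_one_powr_ge_zero)
    also have "\<dots> \<le> max K 0 * (x0 * 2 powr real k) powr (-g)"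
      by (intro mult_right_mono) auto
    finally have "c k * prob (E k) \<le> max K 0 * (c k * (x0 * 2 powr real k) powr (-g))"
      by (rule ord_le_eq_trans[OF mult_left_mono]) (simp_all add: c_def mult_ac)
    then have "ennreal (c k) * emeasure M (E k)
        \<le> ennreal (max K 0 * (c k * (x0 * 2 powr real k) powr (-g)))"
      unfolding c_def by (simp add: emeasure_eq_measure ennreal_mult'[symmetric] ennreal_leI)
    also have "\<dots> = ennreal (D * r ^ k)"
      unfolding c_def D_def r_def dyadic_layer_weight[OF x0] by (simp add: mult_ac)
    finally show ?thesis .
  qed
  have "(\<integral>\<^sup>+y. ennreal (\<bar>y\<bar> powr d) \<partial>M)
      \<le> (\<integral>\<^sup>+y. ennreal (x0 powr d) + (\<Sum>k. ennreal (c k) * indicator (E k) y) \<partial>M)"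
    unfolding c_def E_def by (intro nn_integral_mono abs_powr_le_dyadic_layers d x0)
  also have "\<dots> = ennreal (x0 powr d) + (\<Sum>k. ennreal (c k) * emeasure M (E k))"
    using E_sets emeasure_space_1
    by (simp add: nn_integral_add nn_integral_suminf nn_integral_cmult_indicator)
  also have "\<dots> \<le> ennreal (x0 powr d) + (\<Sum>k. ennreal (D * r ^ k))"
    by (intro add_left_mono suminf_le layer) (auto intro: summableI)
  also have "\<dots> < \<infinity>"
    using r unfolding D_def by (simp add: suminf_ennreal2 summable_mult summable_geometric)
  finally show ?thesis
    by (intro integrableI_bounded) auto
qed

lemma (in real_distribution) tail_bound_of_limits:
  assumes "((\<lambda>x. x powr g * (1 - cdf M x)) \<longlongrightarrow> cp) at_top"
    and "((\<lambda>x. \<bar>x\<bar> powr g * cdf M x) \<longlongrightarrow> cm) at_bot"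
  obtains x0 K where "0 < x0" "\<And>x. x0 \<le> x \<Longrightarrow> prob {y. x < \<bar>y\<bar>} \<le> K * x powr (-g)"
proof -
  obtain X1 where X1: "\<And>x. X1 \<le> x \<Longrightarrow> x powr g * (1 - cdf M x) < cp + 1"
    using order_tendstoD(2)[OF assms(1), of "cp + 1"] by (auto simp: eventually_at_top_linorder)
  obtain X2 where X2: "\<And>x. x \<le> X2 \<Longrightarrow> \<bar>x\<bar> powr g * cdf M x < cm + 1"
    using order_tendstoD(2)[OF assms(2), of "cm + 1"] by (auto simp: eventually_at_bot_linorder)
  define x0 where "x0 = max 1 (max X1 (-X2))"
  have "prob {y. x < \<bar>y\<bar>} \<le> (cp + cm + 2) * x powr (-g)" if x: "x0 \<le> x" for x
  proof -
    have x_pos: "0 < x" and "X1 \<le> x" "-x \<le> X2" using x unfolding x0_def by auto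
    then have "x powr g * (1 - cdf M x) < cp + 1" "x powr g * cdf M (-x) < cm + 1"
      using X1 X2[of "-x"] by auto
    then have right: "1 - cdf M x \<le> (cp + 1) * x powr (-g)"
      and left: "cdf M (-x) \<le> (cm + 1) * x powr (-g)"
      using x_pos by (simp_all add: powr_minus_divide field_simps)
    have "prob {y. x < \<bar>y\<bar>} \<le> prob ({x<..} \<union> {..-x})"
      by (intro finite_measure_mono) auto
    also have "\<dots> \<le> prob {x<..} + prob {..-x}"
      by (intro measure_Un_le) auto
    also have "prob {x<..} = 1 - cdf M x"
      using prob_compl[of "{..x}"] by (simp add: cdf_def Compl_eq_Diff_UNIV[symmetric] Compl_atMost)
    also have "prob {..-x} = cdf M (-x)" by (simp add: cdf_def)
    finally show ?thesis using right left by (simp add: algebra_simps)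
  qed
  moreover have "0 < x0" unfolding x0_def by simp
  ultimately show thesis using that by blast
qed

lemma (in real_distribution) integrable_abs_powr_mono:
  assumes "integrable M (\<lambda>x. \<bar>x\<bar> powr p)" and "0 < d" "d \<le> p"
  shows "integrable M (\<lambda>x. \<bar>x\<bar> powr d)"
proof (rule Bochner_Integration.integrable_bound)
  show "integrable M (\<lambda>x. 1 + \<bar>x\<bar> powr p)" using assms(1) by simp
  have "\<bar>x\<bar> powr d \<le> 1 + \<bar>x\<bar> powr p" for x
  proof (cases "\<bar>x\<bar> \<le> 1")
    case True
    then have "\<bar>x\<bar> powr d \<le> 1" using assms by (intro powr_le1) auto
    then show ?thesis using powr_ge_zero[of "\<bar>x\<bar>" p] by linarith
  next
    case False
    then have "\<bar>x\<bar> powr d \<le> \<bar>x\<bar> powr p" using assms by (intro powr_mono) auto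
    then show ?thesis by simp
  qed
  then show "AE x in M. norm (\<bar>x\<bar> powr d) \<le> norm (1 + \<bar>x\<bar> powr p)" by simp
qed simp

lemma (in real_distribution) H_gamma_integrable_abs_powr:
  assumes H: "H_gamma M g" and d: "0 < d" "d < g" and "g \<le> 2"
  shows "integrable M (\<lambda>x. \<bar>x\<bar> powr d)"
proof -
  have of_limits: "integrable M (\<lambda>x. \<bar>x\<bar> powr d)"
    if "((\<lambda>x. x powr g * (1 - cdf M x)) \<longlongrightarrow> cp) at_top"
      "((\<lambda>x. \<bar>x\<bar> powr g * cdf M x) \<longlongrightarrow> cm) at_bot" for cp cm
    using tail_bound_of_limits[OF that] integrable_abs_powr_of_tail_bound[OF d] by metis
  consider "g = 2" | "g = 1" | "g \<in> {0<..<1} \<union> {1<..<2}" using d \<open>g \<le> 2\<close> by fastforce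
  then show ?thesis
  proof cases
    case 1
    then have "integrable M (\<lambda>x. \<bar>x\<bar> powr 2)"
      using H unfolding H_gamma_def by (simp add: powr_numeral)
    then show ?thesis by (rule integrable_abs_powr_mono) (use d 1 in auto)
  next
    case 2
    then consider "integrable M (\<lambda>x. \<bar>x\<bar> powr 1)"
      | c where "((\<lambda>x. x * (1 - cdf M x)) \<longlongrightarrow> c) at_top" "((\<lambda>x. \<bar>x\<bar> * cdf M x) \<longlongrightarrow> c) at_bot"
      using H unfolding H_gamma_def by (auto simp: powr_one')
    then show ?thesis
    proof cases
      case 1
      then show ?thesis by (rule integrable_abs_powr_mono) (use d 2 in auto)
    next
      case (2 c)
      have "((\<lambda>x. x powr g * (1 - cdf M x)) \<longlongrightarrow> c) at_top"
        using eventually_gt_at_top[of 0]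
        by (rule Lim_transform_eventually[OF 2(1), OF eventually_mono]) (simp add: \<open>g = 1\<close>)
      moreover have "((\<lambda>x. \<bar>x\<bar> powr g * cdf M x) \<longlongrightarrow> c) at_bot"
        using eventually_le_at_bot[of "-1"]
        by (rule Lim_transform_eventually[OF 2(2), OF eventually_mono]) (simp add: \<open>g = 1\<close>)
      ultimately show ?thesis by (rule of_limits)
    qed
  next
    case 3
    then show ?thesis using H of_limits unfolding H_gamma_def by blast
  qed
qed

lemma (in real_distribution) H_gamma_char_bound:
  assumes H: "H_gamma M g" and d: "0 < d" "d < g" and "g \<le> 2"
  obtains C where "0 \<le> C" "\<And>\<xi>. cmod (1 - char M \<xi>) \<le> C * \<bar>\<xi>\<bar> powr d"
proof
  have "integrable M (\<lambda>x. \<bar>x\<bar> powr d)" using H_gamma_integrable_abs_powr[OF assms] .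
  moreover have "integrable M (\<lambda>x. x) \<and> expectation (\<lambda>x. x) = 0" if "1 < d"
    using H that d \<open>g \<le> 2\<close> unfolding H_gamma_def by auto
  ultimately show "cmod (1 - char M \<xi>) \<le> 2 * expectation (\<lambda>x. \<bar>x\<bar> powr d) * \<bar>\<xi>\<bar> powr d" for \<xi>
    using d \<open>g \<le> 2\<close> by (intro cmod_one_minus_char_le_moment) auto
qed (simp add: integral_nonneg_AE)

definition smoothing_transform ::
  "'a measure \<Rightarrow> nat \<Rightarrow> (nat \<Rightarrow> 'a \<Rightarrow> real) \<Rightarrow> (real \<Rightarrow> complex) \<Rightarrow> real \<Rightarrow> complex" where
  "smoothing_transform M N A \<psi> \<xi> = (\<integral>\<omega>. (\<Prod>i<N. \<psi> (A i \<omega> * \<xi>)) \<partial>M)"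

lemma cmod_one_minus_prod_le:
  fixes \<psi> :: "real \<Rightarrow> complex" and x :: "nat \<Rightarrow> real"
  assumes "\<And>\<eta>. cmod (\<psi> \<eta>) \<le> 1" and "\<And>\<eta>. cmod (1 - \<psi> \<eta>) \<le> a * \<bar>\<eta>\<bar> powr d + b"
    and "\<And>i. i < N \<Longrightarrow> 0 \<le> x i"
  shows "cmod (1 - (\<Prod>i<N. \<psi> (x i * \<xi>))) \<le> a * \<bar>\<xi>\<bar> powr d * (\<Sum>i<N. x i powr d) + real N * b"
proof -
  have "cmod (1 - (\<Prod>i<N. \<psi> (x i * \<xi>))) = cmod ((\<Prod>i<N. \<psi> (x i * \<xi>)) - (\<Prod>i<N. 1))"
    by (simp add: norm_minus_commute)
  also have "\<dots> \<le> (\<Sum>i<N. cmod (1 - \<psi> (x i * \<xi>)))"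
    using assms(1) norm_prod_diff[of "{..<N}" "\<lambda>i. \<psi> (x i * \<xi>)" "\<lambda>_. 1"]
    by (simp add: norm_minus_commute)
  also have "\<dots> \<le> (\<Sum>i<N. a * \<bar>\<xi>\<bar> powr d * x i powr d + b)"
  proof (rule sum_mono)
    fix i assume "i \<in> {..<N}"
    then have "\<bar>x i * \<xi>\<bar> powr d = x i powr d * \<bar>\<xi>\<bar> powr d"
      using assms(3) by (simp add: abs_mult powr_mult)
    then show "cmod (1 - \<psi> (x i * \<xi>)) \<le> a * \<bar>\<xi>\<bar> powr d * x i powr d + b"
      using assms(2)[of "x i * \<xi>"] by (simp add: mult_ac)
  qed
  also have "\<dots> = a * \<bar>\<xi>\<bar> powr d * (\<Sum>i<N. x i powr d) + real N * b"
    by (simp add: sum.distrib sum_distrib_left)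
  finally show ?thesis .
qed

lemma cmod_one_minus_smoothing_transform_le:
  fixes A :: "nat \<Rightarrow> 'a \<Rightarrow> real" and \<psi> :: "real \<Rightarrow> complex"
  assumes "prob_space M" and A_meas: "\<forall>i<N. A i \<in> borel_measurable M"
    and A_nonneg: "\<forall>i<N. \<forall>\<omega>\<in>space M. A i \<omega> \<ge> 0"
    and \<psi>_meas: "\<psi> \<in> borel_measurable borel" and \<psi>_le_1: "\<And>\<eta>. cmod (\<psi> \<eta>) \<le> 1"
    and \<psi>_dev: "\<And>\<eta>. cmod (1 - \<psi> \<eta>) \<le> a * \<bar>\<eta>\<bar> powr d + b" and "0 \<le> a" "0 \<le> b"
    and moment: "(\<integral>\<^sup>+\<omega>. (\<Sum>j<N. ennreal (A j \<omega> powr d)) \<partial>M) = ennreal m" and "0 \<le> m"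
  shows "cmod (1 - smoothing_transform M N A \<psi> \<xi>) \<le> a * m * \<bar>\<xi>\<bar> powr d + real N * b"
proof -
  interpret prob_space M by fact
  define f where "f \<omega> = (\<Prod>i<N. \<psi> (A i \<omega> * \<xi>))" for \<omega>
  have "f \<in> borel_measurable M"
    unfolding f_def using A_meas by (intro borel_measurable_prod measurable_compose[OF _ \<psi>_meas]) auto
  moreover have "cmod (f \<omega>) \<le> 1" for \<omega>
    unfolding f_def prod_norm[symmetric] using \<psi>_le_1 by (intro prod_le_1) auto
  ultimately have f_int: "integrable M f" by (intro integrable_const_bound[of _ 1]) auto
  have pointwise: "ennreal (cmod (1 - f \<omega>))
      \<le> ennreal (a * \<bar>\<xi>\<bar> powr d) * (\<Sum>j<N. ennreal (A j \<omega> powr d)) + ennreal (real N * b)"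
    if "\<omega> \<in> space M" for \<omega>
  proof -
    have "ennreal (cmod (1 - f \<omega>))
        \<le> ennreal (a * \<bar>\<xi>\<bar> powr d * (\<Sum>i<N. A i \<omega> powr d) + real N * b)"
      unfolding f_def using A_nonneg that
      by (intro ennreal_leI cmod_one_minus_prod_le \<psi>_le_1 \<psi>_dev) auto
    also have "\<dots> = ennreal (a * \<bar>\<xi>\<bar> powr d) * (\<Sum>j<N. ennreal (A j \<omega> powr d)) + ennreal (real N * b)"
      using \<open>0 \<le> a\<close> \<open>0 \<le> b\<close> by (simp add: ennreal_plus ennreal_mult sum_ennreal sum_nonneg)
    finally show ?thesis .
  qed
  have "1 - integral\<^sup>L M f = integral\<^sup>L M (\<lambda>\<omega>. 1 - f \<omega>)"
    using f_int by (simp add: prob_space)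
  then have "ennreal (cmod (1 - integral\<^sup>L M f)) \<le> (\<integral>\<^sup>+\<omega>. ennreal (cmod (1 - f \<omega>)) \<partial>M)"
    using f_int integral_norm_bound_ennreal[of M "\<lambda>\<omega>. 1 - f \<omega>"] by simp
  also have "\<dots> \<le> (\<integral>\<^sup>+\<omega>. ennreal (a * \<bar>\<xi>\<bar> powr d) * (\<Sum>j<N. ennreal (A j \<omega> powr d))
      + ennreal (real N * b) \<partial>M)"
    by (intro nn_integral_mono pointwise)
  also have "\<dots> = ennreal (a * \<bar>\<xi>\<bar> powr d) * (\<integral>\<^sup>+\<omega>. (\<Sum>j<N. ennreal (A j \<omega> powr d)) \<partial>M)
      + ennreal (real N * b)"
  proof -
    have "(\<lambda>\<omega>. \<Sum>j<N. ennreal (A j \<omega> powr d)) \<in> borel_measurable M"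
      using A_meas by (intro borel_measurable_sum) auto
    then show ?thesis by (subst nn_integral_add) (auto simp: nn_integral_cmult emeasure_space_1)
  qed
  also have "\<dots> = ennreal (a * m * \<bar>\<xi>\<bar> powr d + real N * b)"
    using \<open>0 \<le> a\<close> \<open>0 \<le> b\<close> \<open>0 \<le> m\<close> unfolding moment
    by (simp add: ennreal_mult[symmetric] ennreal_plus mult_ac)
  finally show ?thesis
    using \<open>0 \<le> a\<close> \<open>0 \<le> b\<close> \<open>0 \<le> m\<close> unfolding smoothing_transform_def f_def
    by (subst (asm) ennreal_le_iff) auto
qed

lemma cauchy_solution_char:
  assumes "cauchy_solution M N A phi0 phi" and "0 \<le> s"
  shows "cmod (phi s \<eta>) \<le> 1" and "phi s \<in> borel_measurable borel"
proof -
  obtain F where "real_distribution F" "phi s = char F"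
    using assms unfolding cauchy_solution_def by blast
  then show "cmod (phi s \<eta>) \<le> 1" and "phi s \<in> borel_measurable borel"
    by (simp_all add: real_distribution.cmod_char_le_1 real_distribution.char_measurable)
qed

lemma has_real_derivative_power_div_fact:
  "((\<lambda>s. (c * s) ^ Suc n / fact (Suc n)) has_real_derivative c * (c * s) ^ n / fact n) (at s)"
proof -
  have "((\<lambda>s. (c * s) ^ Suc n) has_real_derivative real (Suc n) * (c * s) ^ n * c) (at s)"
    using DERIV_power[OF DERIV_cmult_Id[of c s], of "Suc n"] by (simp add: mult_ac)
  then have "((\<lambda>s. (c * s) ^ Suc n / fact (Suc n)) has_real_derivative
      real (Suc n) * (c * s) ^ n * c / fact (Suc n)) (at s)"
    by (rule DERIV_cdivide)
  also have "real (Suc n) * (c * s) ^ n * c / fact (Suc n) = c * (c * s) ^ n / fact n"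
    unfolding fact_Suc of_nat_mult by (simp del: of_nat_Suc)
  finally show ?thesis .
qed

text \<open>Multiplying by \<open>exp s\<close> removes the loss term \<open>- phi\<close> from the equation.\<close>

lemma cauchy_solution_exp_weighted_derivative:
  assumes "cauchy_solution M N A phi0 phi" and "0 < s"
  shows "((\<lambda>s. exp s *\<^sub>R (1 - phi s \<xi>)) has_vector_derivative
    exp s *\<^sub>R (1 - smoothing_transform M N A (phi s) \<xi>)) (at s)"
proof -
  define J where "J = smoothing_transform M N A (phi s) \<xi>"
  have "((\<lambda>s. phi s \<xi>) has_vector_derivative - phi s \<xi> + J) (at s)"
    using assms unfolding cauchy_solution_def J_def smoothing_transform_def by blast
  then have "((\<lambda>s. exp s *\<^sub>R (1 - phi s \<xi>)) has_vector_derivative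
      exp s *\<^sub>R (0 - (- phi s \<xi> + J)) + exp s *\<^sub>R (1 - phi s \<xi>)) (at s)"
    by (intro has_vector_derivative_scaleR has_vector_derivative_diff
        has_vector_derivative_const DERIV_exp)
  then show ?thesis unfolding J_def by (simp add: algebra_simps)
qed

lemma cauchy_solution_gain_bound:
  fixes A :: "nat \<Rightarrow> 'a \<Rightarrow> real" and phi :: "real \<Rightarrow> real \<Rightarrow> complex"
  assumes "prob_space M" and "\<forall>i<N. A i \<in> borel_measurable M"
    and "\<forall>i<N. \<forall>\<omega>\<in>space M. A i \<omega> \<ge> 0"
    and sol: "cauchy_solution M N A phi0 phi" and "0 \<le> C"
    and moment: "(\<integral>\<^sup>+\<omega>. (\<Sum>j<N. ennreal (A j \<omega> powr d)) \<partial>M) = ennreal (q + 1)" and "0 \<le> q + 1"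
    and dev: "\<And>\<eta>. cmod (1 - phi s \<eta>) \<le> C * exp (q * s) * \<bar>\<eta>\<bar> powr d + 2 * (real N * s) ^ n / fact n"
    and "0 \<le> s" and "s \<le> t"
  shows "exp s * cmod (1 - smoothing_transform M N A (phi s) \<xi>)
    \<le> C * \<bar>\<xi>\<bar> powr d * (exp ((q + 1) * s) * (q + 1)) + exp t * (2 * (real N * (real N * s) ^ n / fact n))"
proof -
  have "cmod (1 - smoothing_transform M N A (phi s) \<xi>)
      \<le> C * exp (q * s) * (q + 1) * \<bar>\<xi>\<bar> powr d + real N * (2 * (real N * s) ^ n / fact n)"
    using assms cauchy_solution_char[OF sol]
    by (intro cmod_one_minus_smoothing_transform_le[OF assms(1-3) _ _ dev _ _ moment]) auto
  then have "exp s * cmod (1 - smoothing_transform M N A (phi s) \<xi>) \<le> exp s * (C * exp (q * s) * (q + 1)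
      * \<bar>\<xi>\<bar> powr d + real N * (2 * (real N * s) ^ n / fact n))"
    by simp
  also have "\<dots> = C * \<bar>\<xi>\<bar> powr d * (exp ((q + 1) * s) * (q + 1))
      + exp s * (2 * (real N * (real N * s) ^ n / fact n))"
    by (simp add: algebra_simps exp_add)
  also have "\<dots> \<le> C * \<bar>\<xi>\<bar> powr d * (exp ((q + 1) * s) * (q + 1))
      + exp t * (2 * (real N * (real N * s) ^ n / fact n))"
    using \<open>0 \<le> s\<close> \<open>s \<le> t\<close> by (intro add_left_mono mult_right_mono) auto
  finally show ?thesis .
qed

lemma cauchy_solution_deviation_step:
  fixes A :: "nat \<Rightarrow> 'a \<Rightarrow> real" and phi :: "real \<Rightarrow> real \<Rightarrow> complex"
  assumes "prob_space M" and "\<forall>i<N. A i \<in> borel_measurable M"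
    and "\<forall>i<N. \<forall>\<omega>\<in>space M. A i \<omega> \<ge> 0"
    and sol: "cauchy_solution M N A phi0 phi"
    and init: "\<And>\<xi>. cmod (1 - phi0 \<xi>) \<le> C * \<bar>\<xi>\<bar> powr d" and "0 \<le> C"
    and "(\<integral>\<^sup>+\<omega>. (\<Sum>j<N. ennreal (A j \<omega> powr d)) \<partial>M) = ennreal (q + 1)" and "0 \<le> q + 1"
    and IH: "\<And>s \<eta>. 0 \<le> s \<Longrightarrow>
      cmod (1 - phi s \<eta>) \<le> C * exp (q * s) * \<bar>\<eta>\<bar> powr d + 2 * (real N * s) ^ n / fact n"
    and "0 \<le> t"
  shows "cmod (1 - phi t \<xi>) \<le> C * exp (q * t) * \<bar>\<xi>\<bar> powr d + 2 * (real N * t) ^ Suc n / fact (Suc n)"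
proof (cases "t = 0")
  case True
  then show ?thesis using init sol unfolding cauchy_solution_def by simp
next
  case False
  then have "0 < t" using \<open>0 \<le> t\<close> by simp
  define z where "z s = exp s *\<^sub>R (1 - phi s \<xi>)" for s
  define B where "B s = C * \<bar>\<xi>\<bar> powr d * exp ((q + 1) * s)
      + exp t * (2 * ((real N * s) ^ Suc n / fact (Suc n)))" for s
  define B' where "B' s = C * \<bar>\<xi>\<bar> powr d * (exp ((q + 1) * s) * (q + 1))
      + exp t * (2 * (real N * (real N * s) ^ n / fact n))" for s
  have B_deriv: "(B has_real_derivative B' s) (at s)" for s
  proof -
    have "((\<lambda>s. exp ((q + 1) * s)) has_real_derivative exp ((q + 1) * s) * (q + 1)) (at s)"
      using DERIV_exp[THEN DERIV_chain2, OF DERIV_cmult_Id[of "q + 1" s]] by simp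
    then show ?thesis
      unfolding B_def B'_def by (intro DERIV_add DERIV_cmult has_real_derivative_power_div_fact)
  qed
  have z'_le: "cmod (exp s *\<^sub>R (1 - smoothing_transform M N A (phi s) \<xi>)) \<le> B' s"
    if "0 < s" "s < t" for s
    using cauchy_solution_gain_bound[OF assms(1-4,6-8) IH, of s t] that unfolding B'_def by simp
  have "continuous_on {0..t} (\<lambda>s. phi s \<xi>)"
    using sol unfolding cauchy_solution_def by (auto intro: continuous_on_subset)
  then have z_cont: "continuous_on {0..t} z" unfolding z_def by (intro continuous_intros)
  have B_cont: "continuous_on {0..t} B" unfolding B_def by (intro continuous_intros) auto
  have "exp t * cmod (1 - phi t \<xi>) \<le> cmod (z 0) + cmod (z t - z 0)"
    using norm_triangle_ineq[of "z 0" "z t - z 0"] unfolding z_def by simp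
  also have "\<dots> \<le> C * \<bar>\<xi>\<bar> powr d + (B t - B 0)"
  proof (rule add_mono)
    show "cmod (z 0) \<le> C * \<bar>\<xi>\<bar> powr d"
      using init sol unfolding z_def cauchy_solution_def by simp
    show "cmod (z t - z 0) \<le> B t - B 0"
      using cauchy_solution_exp_weighted_derivative[OF sol] z'_le B_deriv unfolding z_def
      by (intro norm_diff_le_majorant_diff[OF \<open>0 < t\<close> z_cont[unfolded z_def] B_cont]) auto
  qed
  also have "\<dots> = exp t * (C * exp (q * t) * \<bar>\<xi>\<bar> powr d + 2 * (real N * t) ^ Suc n / fact (Suc n))"
    unfolding B_def by (simp add: algebra_simps exp_add)
  finally show ?thesis by simp
qed

text \<open>The iteration starts from the trivial bound \<open>cmod (1 - phi s \<eta>) \<le> 2\<close>; the additive error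
  \<open>2 * (N * s) ^ n / fact n\<close> vanishes as \<open>n \<rightarrow> \<infinity>\<close>, so no a priori bound on
  \<open>cmod (1 - phi s \<eta>) / \<bar>\<eta>\<bar> powr d\<close> is needed.\<close>

lemma cauchy_solution_deviation_bound:
  fixes A :: "nat \<Rightarrow> 'a \<Rightarrow> real" and phi :: "real \<Rightarrow> real \<Rightarrow> complex"
  assumes "prob_space M" and "\<forall>i<N. A i \<in> borel_measurable M"
    and "\<forall>i<N. \<forall>\<omega>\<in>space M. A i \<omega> \<ge> 0"
    and sol: "cauchy_solution M N A phi0 phi"
    and "\<And>\<xi>. cmod (1 - phi0 \<xi>) \<le> C * \<bar>\<xi>\<bar> powr d" and "0 \<le> C"
    and "(\<integral>\<^sup>+\<omega>. (\<Sum>j<N. ennreal (A j \<omega> powr d)) \<partial>M) = ennreal (q + 1)" and "0 \<le> q + 1"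
    and "0 \<le> t"
  shows "cmod (1 - phi t \<xi>) \<le> C * exp (q * t) * \<bar>\<xi>\<bar> powr d"
proof -
  have iterate: "cmod (1 - phi s \<eta>) \<le> C * exp (q * s) * \<bar>\<eta>\<bar> powr d + 2 * (real N * s) ^ n / fact n"
    if "0 \<le> s" for n s \<eta>
    using that
  proof (induction n arbitrary: s \<eta>)
    case 0
    have "cmod (1 - phi s \<eta>) \<le> 1 + cmod (phi s \<eta>)" using norm_triangle_ineq4[of "1::complex"] by simp
    moreover have "cmod (phi s \<eta>) \<le> 1" using cauchy_solution_char(1)[OF sol \<open>0 \<le> s\<close>] .
    moreover have "0 \<le> C * exp (q * s) * \<bar>\<eta>\<bar> powr d" using \<open>0 \<le> C\<close> by simp
    ultimately show ?case by simp
  next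
    case (Suc n)
    show ?case by (rule cauchy_solution_deviation_step) (use assms Suc in auto)
  qed
  have "(\<lambda>n. inverse (fact n) * (real N * t) ^ n) \<longlonglongrightarrow> 0"
    by (rule summable_LIMSEQ_zero[OF summable_exp])
  then have "(\<lambda>n. 2 * (inverse (fact n) * (real N * t) ^ n)) \<longlonglongrightarrow> 0"
    by (rule tendsto_mult_right_zero)
  then have "(\<lambda>n. C * exp (q * t) * \<bar>\<xi>\<bar> powr d + 2 * (real N * t) ^ n / fact n)
      \<longlonglongrightarrow> C * exp (q * t) * \<bar>\<xi>\<bar> powr d + 0"
    by (intro tendsto_add tendsto_const) (simp add: divide_inverse mult_ac)
  then show ?thesis
    using iterate[OF \<open>0 \<le> t\<close>] by (intro LIMSEQ_le_const) auto
qed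

lemma tendsto_one_of_deviation_bound:
  fixes phi :: "real \<Rightarrow> real \<Rightarrow> complex"
  assumes bound: "\<And>t \<eta>. 0 \<le> t \<Longrightarrow> cmod (1 - phi t \<eta>) \<le> C * exp (q * t) * \<bar>\<eta>\<bar> powr d"
    and "q < m * d"
  shows "((\<lambda>t. phi t (exp (- t * m) * \<xi>)) \<longlongrightarrow> 1) at_top"
proof -
  have "\<forall>\<^sub>F t in at_top. norm (phi t (exp (- t * m) * \<xi>) - 1)
      \<le> C * \<bar>\<xi>\<bar> powr d * exp (- ((m * d - q) * t))"
    using eventually_ge_at_top[of 0]
  proof eventually_elim
    case (elim t)
    have "norm (phi t (exp (- t * m) * \<xi>) - 1) \<le> C * exp (q * t) * \<bar>exp (- t * m) * \<xi>\<bar> powr d"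
      using bound[OF elim] by (simp add: norm_minus_commute)
    also have "\<dots> = C * \<bar>\<xi>\<bar> powr d * exp (- ((m * d - q) * t))"
      by (simp add: abs_mult powr_mult exp_powr_real mult_ac exp_add[symmetric] algebra_simps)
    finally show ?case .
  qed
  moreover have "((\<lambda>t. C * \<bar>\<xi>\<bar> powr d * exp (- ((m * d - q) * t))) \<longlongrightarrow> 0) at_top"
    using \<open>q < m * d\<close>
    by (auto intro!: tendsto_mult_right_zero filterlim_compose[OF exp_at_bot]
        filterlim_tendsto_pos_mult_at_top filterlim_ident simp: filterlim_uminus_at_bot)
  ultimately have "((\<lambda>t. phi t (exp (- t * m) * \<xi>) - 1) \<longlongrightarrow> 0) at_top"
    by (rule Lim_null_comparison)
  then show ?thesis by (simp add: LIM_zero_iff)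
qed

lemma mufun_finite_moment:
  assumes "0 < s" and "mufun M N A s < \<infinity>"
  obtains q where "(\<integral>\<^sup>+\<omega>. (\<Sum>j<N. ennreal (A j \<omega> powr s)) \<partial>M) = ennreal (q + 1)"
    and "0 \<le> q + 1" and "mufun M N A s = ereal (q / s)"
proof -
  define I where "I = (\<integral>\<^sup>+\<omega>. (\<Sum>j<N. ennreal (A j \<omega> powr s)) \<partial>M)"
  have mu: "mufun M N A s = (enn2ereal I - 1) / ereal s"
    unfolding mufun_def Qfun_def I_def by simp
  then have "I \<noteq> \<top>" using assms by auto
  then have I: "I = ennreal (enn2real I - 1 + 1)" by (simp add: ennreal_enn2real less_top)
  moreover have "mufun M N A s = ereal ((enn2real I - 1) / s)"
    unfolding mu using \<open>0 < s\<close> by (subst I) (simp add: enn2ereal_ennreal ereal_divide one_ereal_def)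
  ultimately show thesis using that[of "enn2real I - 1"] unfolding I_def by simp
qed

theorem theorem2:
  fixes M :: "'a measure" and N :: nat and A :: "nat \<Rightarrow> 'a \<Rightarrow> real"
    and M0 :: "real measure" and phi :: "real \<Rightarrow> real \<Rightarrow> complex"
    and \<gamma> \<delta> :: real
  assumes "prob_space M"
    and "N \<ge> 2"
    and "\<forall>i<N. A i \<in> borel_measurable M"
    and "\<forall>i<N. \<forall>\<omega>\<in>space M. A i \<omega> \<ge> 0"
    and "prob_space.prob M {\<omega>\<in>space M. (\<Sum>i<N. if A i \<omega> > 0 then 1 else 0 :: nat) \<in> {0, 1}} < 1"
    and "prob_space.expectation M (\<lambda>\<omega>. (\<Sum>i<N. if A i \<omega> > 0 then 1 else 0 :: real)) > 1"
    and "prob_space.prob M {\<omega>\<in>space M. \<forall>i<N. A i \<omega> \<in> {0, 1}} < 1"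
    and "real_distribution M0"
    and "cauchy_solution M N A (char M0) phi"
    and "0 < \<gamma>" and "\<gamma> \<le> 2"
    and "H_gamma M0 \<gamma>"
    and "0 < \<delta>" and "\<delta> < \<gamma>"
    and "mufun M N A \<delta> < mufun M N A \<gamma>" and "mufun M N A \<gamma> < \<infinity>"
  shows "\<forall>\<xi>::real. ((\<lambda>t. phi t (exp (- t * real_of_ereal (mufun M N A \<gamma>)) * \<xi>)) \<longlongrightarrow> 1) at_top"
proof
  fix \<xi> :: real
  have "mufun M N A \<delta> < \<infinity>" using assms(15,16) by (rule less_trans)
  then obtain q where moment: "(\<integral>\<^sup>+\<omega>. (\<Sum>j<N. ennreal (A j \<omega> powr \<delta>)) \<partial>M) = ennreal (q + 1)"
    and "0 \<le> q + 1" and mu_\<delta>: "mufun M N A \<delta> = ereal (q / \<delta>)"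
    using mufun_finite_moment[OF \<open>0 < \<delta>\<close>] by blast
  obtain q\<gamma> where mu_\<gamma>: "mufun M N A \<gamma> = ereal (q\<gamma> / \<gamma>)"
    using mufun_finite_moment[OF \<open>0 < \<gamma>\<close> assms(16)] by blast
  obtain C where "0 \<le> C" and init: "\<And>\<eta>. cmod (1 - char M0 \<eta>) \<le> C * \<bar>\<eta>\<bar> powr \<delta>"
    using real_distribution.H_gamma_char_bound[OF assms(8,12,13,14,11)] by blast
  have "cmod (1 - phi t \<eta>) \<le> C * exp (q * t) * \<bar>\<eta>\<bar> powr \<delta>" if "0 \<le> t" for t \<eta>
    using cauchy_solution_deviation_bound[OF assms(1,3,4,9) init \<open>0 \<le> C\<close> moment \<open>0 \<le> q + 1\<close> that] .
  moreover have "q < q\<gamma> / \<gamma> * \<delta>"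
    using assms(15) \<open>0 < \<delta>\<close> unfolding mu_\<delta> mu_\<gamma> by (simp add: field_simps)
  ultimately have "((\<lambda>t. phi t (exp (- t * (q\<gamma> / \<gamma>)) * \<xi>)) \<longlongrightarrow> 1) at_top"
    by (rule tendsto_one_of_deviation_bound)
  then show "((\<lambda>t. phi t (exp (- t * real_of_ereal (mufun M N A \<gamma>)) * \<xi>)) \<longlongrightarrow> 1) at_top"
    unfolding mu_\<gamma> by simp
qed

end
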